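(* Let $p>2$ be a prime, $D$ an integer with $D\not\equiv0\pmod p$, and $\xi\in(0,1)$. Then for any distinct $g,g'\in\mathbb{Z}_p$ there are at least $\xi\cdot(p-1)$ values $c\in\mathbb{Z}_p$ with $c\not\equiv 0\pmod p$ such that \[\mathrm{dist}_{p,D}(c g\bmod p,\ c g'\bmod p) > (1-\xi)\cdot\frac{p-1}{2}.\]
   Context: For $g_0,g_1\in\mathbb{Z}_p$, $\mathrm{dist}_{p,D}(g_0,g_1)=\min\{(g_1-g_0)D^{-1}\bmod p,\ (g_0-g_1)D^{-1}\bmod p\}$, where each term is viewed as an integer in $\{0,\dots,p-1\}$ and $D^{-1}$ is the inverse of $D$ modulo $p$. *)

theory Defs
  imports "HOL-Number_Theory.Number_Theory"
begin

definition inv_mod :: "int \<Rightarrow> int \<Rightarrow> int" where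
  "inv_mod p D = (THE x. x \<in> {0..<p} \<and> [D * x = 1] (mod p))"

definition dist_pD :: "int \<Rightarrow> int \<Rightarrow> int \<Rightarrow> int \<Rightarrow> int" where
  "dist_pD p D g0 g1 = min (((g1 - g0) * inv_mod p D) mod p) (((g0 - g1) * inv_mod p D) mod p)"

end

theory Submission
  imports Defs
begin

text \<open>Multiplication by the nonzero residue e = (g' - g) D\<inverse> permutes the nonzero residues, and
  dist(c g, c g') is the distance of c e from 0 modulo p.  So the count equals the number of
  x \<in> {1..p-1} with min x (p - x) > T, and every x in {\<lfloor>T\<rfloor>+1 .. p-\<lfloor>T\<rfloor>-1} qualifies; these are
  at least p - 2T - 1 = \<xi>(p - 1) values for T = (1 - \<xi>)(p - 1)/2.\<close>

definition residue_norm :: "int \<Rightarrow> int \<Rightarrow> int" where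
  "residue_norm p x = min (x mod p) ((- x) mod p)"

lemma inv_mod_cong:
  fixes p D :: int
  assumes "0 < p" and "coprime D p"
  shows "[D * inv_mod p D = 1] (mod p)"
proof -
  obtain x where x: "[D * x = 1] (mod p)"
    using cong_solve_coprime_int[OF assms(2)] by blast
  have "\<exists>!y. y \<in> {0..<p} \<and> [D * y = 1] (mod p)"
  proof
    show "x mod p \<in> {0..<p} \<and> [D * (x mod p) = 1] (mod p)"
      using x assms(1) by (auto simp: cong_def mod_mult_right_eq)
  next
    fix y assume y: "y \<in> {0..<p} \<and> [D * y = 1] (mod p)"
    then have "[D * y = D * (x mod p)] (mod p)"
      using x by (metis cong_def cong_sym cong_trans mod_mult_right_eq)
    then have "[y = x mod p] (mod p)"
      using assms(2) by (metis cong_mult_lcancel coprime_commute)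
    then show "y = x mod p"
      using y assms(1) by (simp add: cong_def)
  qed
  then show ?thesis
    unfolding inv_mod_def by (rule theI'[THEN conjunct2])
qed

lemma dist_pD_eq_residue_norm:
  "dist_pD p D g0 g1 = residue_norm p ((g1 - g0) * inv_mod p D)"
  unfolding dist_pD_def residue_norm_def by (simp add: algebra_simps)

lemma residue_norm_mod [simp]: "residue_norm p (x mod p) = residue_norm p x"
  unfolding residue_norm_def by (metis mod_minus_eq mod_mod_trivial)

lemma residue_norm_eq_min:
  assumes "x \<in> {1..p - 1}"
  shows "residue_norm p x = min x (p - x)"
  using assms by (simp add: residue_norm_def zmod_zminus1_eq_if)

lemma eq_if_dvd_diff_int:
  fixes p x y :: int
  assumes "x \<in> {0..<p}" and "y \<in> {0..<p}" and "p dvd x - y"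
  shows "x = y"
  using assms by (metis atLeastLessThan_iff mod_eq_dvd_iff mod_pos_pos_trivial)

lemma bij_betw_mult_mod_prime:
  fixes p e :: int
  assumes "prime p" and "\<not> p dvd e"
  shows "bij_betw (\<lambda>c. c * e mod p) {1..p - 1} {1..p - 1}"
proof -
  have p0: "0 < p" using assms(1) prime_gt_0_int by blast
  have maps: "c * e mod p \<in> {1..p - 1}" if "c \<in> {1..p - 1}" for c
  proof -
    have "\<not> p dvd c" using that zdvd_not_zless by auto
    then have "\<not> p dvd c * e" using assms prime_dvd_mult_iff by blast
    then have "c * e mod p \<noteq> 0" by (simp add: dvd_eq_mod_eq_0)
    moreover have "0 \<le> c * e mod p" "c * e mod p < p" using p0 by auto
    ultimately show ?thesis by auto
  qed
  have "inj_on (\<lambda>c. c * e mod p) {1..p - 1}"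
  proof (rule inj_onI)
    fix x y assume "x \<in> {1..p - 1}" "y \<in> {1..p - 1}" "x * e mod p = y * e mod p"
    moreover from this have "p dvd (x - y) * e"
      by (simp add: mod_eq_dvd_iff left_diff_distrib)
    then have "p dvd x - y" using assms prime_dvd_mult_iff by blast
    ultimately show "x = y" by (intro eq_if_dvd_diff_int[of x p y]) auto
  qed
  moreover have "(\<lambda>c. c * e mod p) ` {1..p - 1} = {1..p - 1}"
    by (rule endo_inj_surj) (use maps calculation in auto)
  ultimately show ?thesis by (simp add: bij_betw_def)
qed

lemma card_Collect_bij_betw:
  assumes "bij_betw f A B"
  shows "card {a \<in> A. P (f a)} = card {b \<in> B. P b}"
proof -
  have "bij_betw f {a \<in> A. P (f a)} {b \<in> B. P b}"
    using assms by (auto simp: bij_betw_def inj_on_def)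
  then show ?thesis by (rule bij_betw_same_card)
qed

lemma card_residue_norm_gt:
  fixes p :: int and T :: real
  assumes "0 \<le> T"
  shows "real_of_int p - 2 * T - 1 \<le> real (card {x \<in> {1..p - 1}. T < residue_norm p x})"
proof -
  define a where "a = \<lfloor>T\<rfloor> + 1"
  have "{a..p - a} \<subseteq> {x \<in> {1..p - 1}. T < residue_norm p x}"
  proof
    fix x assume x: "x \<in> {a..p - a}"
    moreover have "1 \<le> a" "T < a" using assms unfolding a_def by linarith+
    ultimately show "x \<in> {x \<in> {1..p - 1}. T < residue_norm p x}"
      by (auto simp: residue_norm_eq_min)
  qed
  then have "card {a..p - a} \<le> card {x \<in> {1..p - 1}. T < residue_norm p x}"
    by (intro card_mono) (auto intro: finite_subset[of _ "{1..p - 1}"])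
  moreover have "real_of_int p - 2 * T - 1 \<le> real (nat (p - a - a + 1))"
    unfolding a_def by linarith
  ultimately show ?thesis by simp
qed

theorem lemma4p1:
  fixes p D g g' :: int and \<xi> :: real
  assumes "prime p" and "p > 2"
    and "\<not> [D = 0] (mod p)"
    and "0 < \<xi>" and "\<xi> < 1"
    and "g \<in> {0..<p}" and "g' \<in> {0..<p}" and "g \<noteq> g'"
  shows "real (card {c \<in> {0..<p}. \<not> [c = 0] (mod p) \<and>
            real_of_int (dist_pD p D ((c * g) mod p) ((c * g') mod p)) > (1 - \<xi>) * (real_of_int p - 1) / 2})
         \<ge> \<xi> * (real_of_int p - 1)"
proof -
  define T where "T = (1 - \<xi>) * (real_of_int p - 1) / 2"
  define e where "e = (g' - g) * inv_mod p D"
  have "coprime D p"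
    using assms(1,3) by (metis cong_0_iff prime_imp_coprime coprime_commute)
  then have "[D * inv_mod p D = 1] (mod p)"
    using assms(2) by (intro inv_mod_cong) auto
  then have "\<not> p dvd inv_mod p D"
    using assms(1) by (metis cong_0_iff cong_sym cong_trans mult_zero_right
        cong_scalar_left dvd_1_iff_1 not_prime_unit)
  moreover have "\<not> p dvd g' - g"
    using assms(6-8) eq_if_dvd_diff_int by blast
  ultimately have bij: "bij_betw (\<lambda>c. c * e mod p) {1..p - 1} {1..p - 1}"
    unfolding e_def using assms(1) by (intro bij_betw_mult_mod_prime) (auto simp: prime_dvd_mult_iff)
  have "dist_pD p D (c * g mod p) (c * g' mod p) = residue_norm p (c * e mod p)" for c
    unfolding dist_pD_eq_residue_norm e_def residue_norm_mod
    by (metis mod_diff_eq mod_mult_left_eq residue_norm_mod right_diff_distrib mult.assoc)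
  moreover have "c \<in> {0..<p} \<and> \<not> [c = 0] (mod p) \<longleftrightarrow> c \<in> {1..p - 1}" for c
    using assms(2) by (auto simp: cong_def dest: zdvd_imp_le)
  ultimately have "{c \<in> {0..<p}. \<not> [c = 0] (mod p) \<and>
        T < dist_pD p D (c * g mod p) (c * g' mod p)}
      = {c \<in> {1..p - 1}. T < residue_norm p (c * e mod p)}"
    by auto
  moreover have "card {c \<in> {1..p - 1}. T < residue_norm p (c * e mod p)}
      = card {x \<in> {1..p - 1}. T < residue_norm p x}"
    by (rule card_Collect_bij_betw[OF bij])
  moreover have "\<xi> * (real_of_int p - 1) = real_of_int p - 2 * T - 1"
    unfolding T_def by (simp add: field_simps)
  moreover have "0 \<le> T" unfolding T_def using assms(2,5) by simp
  ultimately show ?thesis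
    using card_residue_norm_gt[of T p] unfolding T_def[symmetric] by simp
qed

end
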